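(* For any signature $\Sigma$ and any reduced $\Sigma$-forest $f$, the coproduct of $\mathbf N(T(\Sigma))$ satisfies $$\Delta E_f=\sum_{I_1,I_2\subseteq[\deg f]}[(I_1,I_2)\text{ is } f\text{-admissible}]\;E_{f(I_1)}\otimes E_{f(I_2)}.$$
   Context: $\mathbb K$ is a field of characteristic zero, $\mathbb N=\{0,1,2,\dots\}$, $[n]=\{1,\dots,n\}$, and $[P]$ is $1$ if $P$ holds and $0$ otherwise. A signature is a set $\Sigma$ with an arity map $|\cdot|:\Sigma\to\mathbb N$; $\Sigma(n)$ is the set of elements of arity $n$. A $\Sigma$-term is either the leaf $\bot$ or $s(t_1,\dots,t_n)$ with $s\in\Sigma(n)$ and $\Sigma$-terms $t_i$ (a planar rooted tree with internal nodes with $n$ children decorated by $\Sigma(n)$); its degree is its number of internal nodes, its arity $|t|$ its number of leaves. $T(\Sigma)$ is the free nonsymmetric operad on $\Sigma$: $t[t_1,\dots,t_{|t|}]$ grafts the root of $t_i$ onto the $i$-th leaf of $t$ (leaves numbered left to right), unit $\bot$. A $\Sigma$-forest is a finite word of terms, of degree the sum of the degrees; it is reduced if no term is $\bot$; $\mathrm{rd}(w)$ deletes the terms equal to $\bot$ from a word $w$ of terms. The internal nodes of a forest $f$ are identified with $1,\dots,\deg f$ by the left-to-right preorder traversal (terms taken from left to right). For a reduced forest $f$ and $I\subseteq[\deg f]$, the restriction $f(I)$ is the reduced forest obtained by keeping only the internal nodes of $f$ that are in $I$ (with their decorations and arities) and the edges between them: every child position of a kept node which is occupied in $f$ by a leaf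 or by a node not in $I$ becomes a leaf, each kept node whose parent is not kept (or which is a root) becomes the root of a new term, and the resulting terms are ordered by the preorder rank in $f$ of their roots. In particular $f(\emptyset)=\epsilon$. A pair $(I_1,I_2)$ is $f$-admissible if $I_1\sqcup I_2=[\deg f]$, every ancestor of a node in $I_1$ is in $I_1$, and every descendant of a node in $I_2$ is in $I_2$. $\mathbf N(T(\Sigma))$ is the $\mathbb K$-vector space with basis $E_f$, $f$ reduced $\Sigma$-forest, with product $E_{f_1}E_{f_2}=E_{f_1f_2}$ and coproduct the unique algebra morphism with $\Delta E_t=\sum E_{\mathrm{rd}(t')}\otimes E_{\mathrm{rd}(t_1\cdots t_{|t'|})}$ for terms $t\ne\bot$, summed over all $t',t_1,\dots,t_{|t'|}\in T(\Sigma)$ with $t=t'[t_1,\dots,t_{|t'|}]$ (with $E_{\mathrm{rd}(\bot)}=E_\epsilon$). *)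

theory Defs
  imports Main
begin

text \<open>A signature is given by a carrier set Sig of symbols of type 's together with an
arity map ar.  A Sigma-term is Leaf (the leaf bot) or Node s ts.\<close>

datatype 's sterm = Leaf | Node 's "'s sterm list"

type_synonym 's forest = "'s sterm list"

fun wf_term :: "'s set \<Rightarrow> ('s \<Rightarrow> nat) \<Rightarrow> 's sterm \<Rightarrow> bool" where
  "wf_term Sig ar Leaf = True"
| "wf_term Sig ar (Node s ts) = (s \<in> Sig \<and> length ts = ar s \<and> (\<forall>t\<in>set ts. wf_term Sig ar t))"

fun leaves :: "'s sterm \<Rightarrow> nat" where
  "leaves Leaf = 1"
| "leaves (Node s ts) = sum_list (map leaves ts)"

fun graft :: "'s sterm \<Rightarrow> 's sterm list \<Rightarrow> 's sterm"
and graft_list :: "'s sterm list \<Rightarrow> 's sterm list \<Rightarrow> 's sterm list" where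
  "graft Leaf us = hd us"
| "graft (Node s cs) us = Node s (graft_list cs us)"
| "graft_list [] us = []"
| "graft_list (c # cs) us = graft c (take (leaves c) us) # graft_list cs (drop (leaves c) us)"

definition reduced :: "'s forest \<Rightarrow> bool" where
  "reduced f \<longleftrightarrow> (\<forall>t\<in>set f. t \<noteq> Leaf)"

definition rd :: "'s forest \<Rightarrow> 's forest" where
  "rd w = filter (\<lambda>t. t \<noteq> Leaf) w"

fun nodes_term :: "'s sterm \<Rightarrow> nat list list"
and nodes_list :: "nat \<Rightarrow> 's sterm list \<Rightarrow> nat list list" where
  "nodes_term Leaf = []"
| "nodes_term (Node s cs) = [] # nodes_list 0 cs"
| "nodes_list j [] = []"
| "nodes_list j (c # cs) = map (Cons j) (nodes_term c) @ nodes_list (Suc j) cs"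

text \<open>Internal nodes of a forest as pairs (term index, path), in left-to-right preorder;
the node with preorder number k (1-based) is  forest_nodes f ! (k - 1).\<close>
definition forest_nodes :: "'s forest \<Rightarrow> (nat \<times> nat list) list" where
  "forest_nodes f = concat (map (\<lambda>i. map (\<lambda>p. (i, p)) (nodes_term (f ! i))) [0..<length f])"

definition deg :: "'s forest \<Rightarrow> nat" where
  "deg f = length (forest_nodes f)"

definition node_num :: "'s forest \<Rightarrow> nat \<Rightarrow> nat \<times> nat list \<Rightarrow> bool" where
  "node_num f k x \<longleftrightarrow> 1 \<le> k \<and> k \<le> deg f \<and> forest_nodes f ! (k - 1) = x"

definition kept :: "'s forest \<Rightarrow> nat set \<Rightarrow> nat \<times> nat list \<Rightarrow> bool" where
  "kept f I x \<longleftrightarrow> (\<exists>k\<in>I. node_num f k x)"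

primrec subtree :: "'s sterm \<Rightarrow> nat list \<Rightarrow> 's sterm" where
  "subtree t [] = t"
| "subtree t (j # p) = (case t of Leaf \<Rightarrow> Leaf | Node s cs \<Rightarrow> subtree (cs ! j) p)"

text \<open>The term rooted at a kept node, keeping exactly the kept descendants connected to it
(K is the keep-predicate on paths relative to the node); other child positions become leaves.\<close>
fun restr_in :: "'s sterm \<Rightarrow> (nat list \<Rightarrow> bool) \<Rightarrow> 's sterm"
and restr_list :: "nat \<Rightarrow> 's sterm list \<Rightarrow> (nat list \<Rightarrow> bool) \<Rightarrow> 's sterm list" where
  "restr_in Leaf K = Leaf"
| "restr_in (Node s cs) K = Node s (restr_list 0 cs K)"
| "restr_list j [] K = []"
| "restr_list j (c # cs) K =
     (if K [j] then restr_in c (\<lambda>q. K (j # q)) else Leaf) # restr_list (Suc j) cs K"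

text \<open>The restriction f(I): one new term for each kept node that is a root or whose parent
is not kept, ordered by preorder rank of these roots.\<close>
definition restr :: "'s forest \<Rightarrow> nat set \<Rightarrow> 's forest" where
  "restr f I =
     map (\<lambda>(i, p). restr_in (subtree (f ! i) p) (\<lambda>q. kept f I (i, p @ q)))
       (filter (\<lambda>(i, p). kept f I (i, p) \<and> (p = [] \<or> \<not> kept f I (i, butlast p)))
          (forest_nodes f))"

definition ancestor :: "'s forest \<Rightarrow> nat \<Rightarrow> nat \<Rightarrow> bool" where
  "ancestor f a b \<longleftrightarrow> (\<exists>i p q. node_num f a (i, p) \<and> node_num f b (i, q) \<and> (\<exists>r. r \<noteq> [] \<and> q = p @ r))"

definition admissible :: "'s forest \<Rightarrow> nat set \<Rightarrow> nat set \<Rightarrow> bool" where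
  "admissible f I1 I2 \<longleftrightarrow>
     I1 \<union> I2 = {1..deg f} \<and> I1 \<inter> I2 = {} \<and>
     (\<forall>a b. b \<in> I1 \<and> ancestor f a b \<longrightarrow> a \<in> I1) \<and>
     (\<forall>a b. a \<in> I2 \<and> ancestor f a b \<longrightarrow> b \<in> I2)"

text \<open>Elements of N(T(Sigma)) (x) N(T(Sigma)) are represented by their coefficient functions
on the basis E_u (x) E_v (only finitely supported ones occur).\<close>
type_synonym ('s, 'k) tensor = "'s forest \<times> 's forest \<Rightarrow> 'k"

definition tbasis :: "'s forest \<Rightarrow> 's forest \<Rightarrow> ('s, 'k::zero_neq_one) tensor" where
  "tbasis u v = (\<lambda>x. if x = (u, v) then 1 else 0)"

text \<open>Product on the tensor square: (E_u1 (x) E_v1)(E_u2 (x) E_v2) = E_(u1 u2) (x) E_(v1 v2).\<close>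
definition tmul :: "('s, 'k::comm_semiring_1) tensor \<Rightarrow> ('s, 'k) tensor \<Rightarrow> ('s, 'k) tensor" where
  "tmul A B = (\<lambda>(u, v). \<Sum>i\<le>length u. \<Sum>j\<le>length v.
                 A (take i u, take j v) * B (drop i u, drop j v))"

definition tone :: "('s, 'k::zero_neq_one) tensor" where
  "tone = tbasis [] []"

definition DeltaT :: "'s set \<Rightarrow> ('s \<Rightarrow> nat) \<Rightarrow> 's sterm \<Rightarrow> ('s, 'k::comm_semiring_1) tensor" where
  "DeltaT Sig ar t = (\<lambda>(u, v). of_nat (card
     {(t', ts). wf_term Sig ar t' \<and> (\<forall>x\<in>set ts. wf_term Sig ar x) \<and>
        length ts = leaves t' \<and> graft t' ts = t \<and> rd [t'] = u \<and> rd ts = v}))"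

text \<open>The coproduct is the algebra morphism extending DeltaT: Delta E_(t1...tn) is the product
of the Delta E_ti.\<close>
definition Delta :: "'s set \<Rightarrow> ('s \<Rightarrow> nat) \<Rightarrow> 's forest \<Rightarrow> ('s, 'k::comm_semiring_1) tensor" where
  "Delta Sig ar f = foldr (\<lambda>t acc. tmul (DeltaT Sig ar t) acc) f tone"

end

theory Submission
  imports Defs
begin

text \<open>A decomposition t = t'[t_1, ..., t_k] of a term is determined by the set S of internal nodes
  of t that lie in t'; the possible sets S are exactly the prefix-closed (ancestor-closed) sets of
  nodes, and then rd [t'] and rd (t_1 ... t_k) are the restrictions of t to S and to its complement.
  So the coefficient of E_u \<otimes> E_v in Delta E_t counts prefix-closed S with these two
  restrictions.  Since Delta is multiplicative and a prefix-closed set of nodes of a forest t g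
  splits uniquely into one of t and one of g, with restrictions concatenating, the same count
  describes Delta E_f for forests.  Numbering the nodes in preorder turns prefix-closed S into
  admissible pairs (I_1, I_2).\<close>

lemma nodes_list_eq:
  "nodes_list j cs = concat (map (\<lambda>k. map (Cons (j + k)) (nodes_term (cs ! k))) [0..<length cs])"
  by (induction cs arbitrary: j) (simp_all add: map_upt_Suc comp_def del: upt_Suc)

lemma nodes_Node:
  "nodes_term (Node s cs) = [] # concat (map (\<lambda>k. map (Cons k) (nodes_term (cs ! k))) [0..<length cs])"
  by (simp add: nodes_list_eq)

lemma Cons_in_nodes_Node_iff:
  "k # q \<in> set (nodes_term (Node s cs)) \<longleftrightarrow> k < length cs \<and> q \<in> set (nodes_term (cs ! k))"
  unfolding nodes_Node by auto

lemma Cons_in_nodes_iff: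
  "k # q \<in> set (nodes_term t) \<longleftrightarrow>
     (\<exists>s cs. t = Node s cs \<and> k < length cs \<and> q \<in> set (nodes_term (cs ! k)))"
  by (cases t) (simp_all add: Cons_in_nodes_Node_iff del: nodes_term.simps(2))

lemma prefix_in_nodes: "p @ r \<in> set (nodes_term t) \<Longrightarrow> p \<in> set (nodes_term t)"
proof (induction p arbitrary: t)
  case Nil
  then show ?case by (cases t) auto
next
  case (Cons k p)
  then show ?case by (auto simp: Cons_in_nodes_iff)
qed

lemma append_in_nodes_subtree:
  "p \<in> set (nodes_term t) \<Longrightarrow> q \<in> set (nodes_term (subtree t p)) \<Longrightarrow> p @ q \<in> set (nodes_term t)"
proof (induction p arbitrary: t)
  case (Cons k p)
  then obtain s cs where "t = Node s cs" "k < length cs" "p \<in> set (nodes_term (cs ! k))"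
    by (auto simp: Cons_in_nodes_iff)
  with Cons show ?case by (simp add: Cons_in_nodes_Node_iff del: nodes_term.simps)
qed simp

lemma distinct_concat_map:
  assumes "distinct xs" and "\<And>x. x \<in> set xs \<Longrightarrow> distinct (g x)"
    and "\<And>x y. x \<in> set xs \<Longrightarrow> y \<in> set xs \<Longrightarrow> x \<noteq> y \<Longrightarrow> set (g x) \<inter> set (g y) = {}"
  shows "distinct (concat (map g xs))"
  using assms by (induction xs) fastforce+

lemma distinct_nodes_term: "distinct (nodes_term t)"
proof (induction t)
  case (Node s cs)
  then show ?case
    unfolding nodes_Node by (auto simp: distinct_map intro!: distinct_concat_map)
qed simp

definition prefix_closed :: "'a list set \<Rightarrow> bool" where
  "prefix_closed S \<longleftrightarrow> (\<forall>p r. p @ r \<in> S \<longrightarrow> p \<in> S)"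

lemma prefix_closed_nodes_term: "prefix_closed (set (nodes_term t))"
  unfolding prefix_closed_def using prefix_in_nodes by blast

lemma prefix_closed_Cons_slice: "prefix_closed S \<Longrightarrow> prefix_closed {q. k # q \<in> S}"
  unfolding prefix_closed_def by (metis append_Cons mem_Collect_eq)

lemma prefix_closed_Nil_notin: "prefix_closed S \<Longrightarrow> [] \<notin> S \<Longrightarrow> S = {}"
  unfolding prefix_closed_def by (metis append_Nil equals0I)

lemma prefix_closed_butlast: "prefix_closed S \<Longrightarrow> p \<in> S \<Longrightarrow> butlast p \<in> S"
  unfolding prefix_closed_def by (metis append_butlast_last_id butlast.simps(1))

text \<open>For a prefix-closed set S of internal nodes of t, trunk t S and branches t S are the t' and
  the t_1 ... t_k of the decomposition t = t'[t_1, ..., t_k] in which t' consists of the nodes in S.\<close>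

function trunk :: "'s sterm \<Rightarrow> nat list set \<Rightarrow> 's sterm" where
  "trunk Leaf S = Leaf"
| "trunk (Node s cs) S =
     (if [] \<in> S then Node s (map (\<lambda>k. trunk (cs ! k) {q. k # q \<in> S}) [0..<length cs]) else Leaf)"
  by pat_completeness auto
termination
  by (relation "measure (size \<circ> fst)") (auto intro: le_imp_less_Suc size_list_estimation' nth_mem)

function branches :: "'s sterm \<Rightarrow> nat list set \<Rightarrow> 's sterm list" where
  "branches Leaf S = [Leaf]"
| "branches (Node s cs) S =
     (if [] \<in> S then concat (map (\<lambda>k. branches (cs ! k) {q. k # q \<in> S}) [0..<length cs])
      else [Node s cs])"
  by pat_completeness auto
termination
  by (relation "measure (size \<circ> fst)") (auto intro: le_imp_less_Suc size_list_estimation' nth_mem)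

lemma graft_list_map_concat:
  "(\<And>k. k \<in> set xs \<Longrightarrow> length (B k) = leaves (A k)) \<Longrightarrow>
   graft_list (map A xs) (concat (map B xs)) = map (\<lambda>k. graft (A k) (B k)) xs"
  by (induction xs) auto

lemma graft_trunk_branches:
  "graft (trunk t S) (branches t S) = t \<and> length (branches t S) = leaves (trunk t S)"
proof (induction t arbitrary: S)
  case (Node s cs)
  show ?case
  proof (cases "[] \<in> S")
    case True
    let ?T = "\<lambda>k. trunk (cs ! k) {q. k # q \<in> S}" and ?B = "\<lambda>k. branches (cs ! k) {q. k # q \<in> S}"
    have IH: "graft (?T k) (?B k) = cs ! k" "length (?B k) = leaves (?T k)" if "k < length cs" for k
      using Node that by simp_all
    have "graft_list (map ?T [0..<length cs]) (concat (map ?B [0..<length cs])) =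
        map (\<lambda>k. cs ! k) [0..<length cs]"
      using IH by (subst graft_list_map_concat) (auto intro!: map_cong)
    also have "\<dots> = cs"
      by (simp add: map_nth)
    moreover have "sum_list (map (length \<circ> ?B) [0..<length cs]) = sum_list (map (leaves \<circ> ?T) [0..<length cs])"
      using IH by (intro arg_cong[where f = sum_list] map_cong) auto
    ultimately show ?thesis
      using True by (simp add: length_concat)
  qed simp
qed simp

lemma wf_trunk_branches:
  "wf_term Sig ar t \<Longrightarrow> wf_term Sig ar (trunk t S) \<and> (\<forall>x\<in>set (branches t S). wf_term Sig ar x)"
proof (induction t arbitrary: S)
  case (Node s cs)
  have "wf_term Sig ar (trunk (cs ! k) S') \<and> (\<forall>x\<in>set (branches (cs ! k) S'). wf_term Sig ar x)"
    if "k < length cs" for k S'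
    using Node.IH[OF nth_mem[OF that]] Node.prems that by simp
  then show ?case
    using Node.prems by (cases "[] \<in> S") auto
qed simp

lemma nodes_trunk:
  "S \<subseteq> set (nodes_term t) \<Longrightarrow> prefix_closed S \<Longrightarrow> set (nodes_term (trunk t S)) = S"
proof (induction t arbitrary: S)
  case Leaf
  then show ?case by simp
next
  case (Node s cs)
  show ?case
  proof (cases "[] \<in> S")
    case False
    then show ?thesis using prefix_closed_Nil_notin[OF Node.prems(2)] by simp
  next
    case True
    have slice: "k # q \<in> S \<Longrightarrow> k < length cs \<and> q \<in> set (nodes_term (cs ! k))" for k q
      using Node.prems(1) by (metis subsetD Cons_in_nodes_Node_iff)
    have IH: "set (nodes_term (trunk (cs ! k) {q. k # q \<in> S})) = {q. k # q \<in> S}"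
      if "k < length cs" for k
    proof (rule Node.IH)
      show "cs ! k \<in> set cs" using that by simp
      show "{q. k # q \<in> S} \<subseteq> set (nodes_term (cs ! k))" using slice by blast
      show "prefix_closed {q. k # q \<in> S}" using Node.prems(2) by (rule prefix_closed_Cons_slice)
    qed
    have "p \<in> set (nodes_term (trunk (Node s cs) S)) \<longleftrightarrow> p \<in> S" for p
    proof (cases p)
      case (Cons k q)
      have "k # q \<in> set (nodes_term (trunk (Node s cs) S)) \<longleftrightarrow>
          k < length cs \<and> q \<in> set (nodes_term (trunk (cs ! k) {q. k # q \<in> S}))"
        using True by (simp add: Cons_in_nodes_Node_iff del: nodes_term.simps(2) cong: conj_cong)
      also have "\<dots> \<longleftrightarrow> k # q \<in> S"
        using IH slice by blast
      finally show ?thesis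
        using Cons by simp
    qed (simp add: True)
    then show ?thesis by blast
  qed
qed

lemma split_concat:
  "length ts = sum_list (map leaves cs) \<Longrightarrow>
   \<exists>yss. length yss = length cs \<and> (\<forall>k<length cs. length (yss ! k) = leaves (cs ! k)) \<and> ts = concat yss"
proof (induction cs arbitrary: ts)
  case (Cons c cs)
  obtain yss where "length yss = length cs" "\<forall>k<length cs. length (yss ! k) = leaves (cs ! k)"
    "drop (leaves c) ts = concat yss"
    using Cons.IH[of "drop (leaves c) ts"] Cons.prems by auto
  then show ?case
    using Cons.prems by (intro exI[of _ "take (leaves c) ts # yss"])
      (auto simp: nth_Cons split: nat.splits, metis append_take_drop_id)
qed simp

lemma graft_list_concat:
  "length yss = length cs \<Longrightarrow> \<forall>k<length cs. length (yss ! k) = leaves (cs ! k) \<Longrightarrow>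
   graft_list cs (concat yss) = map (\<lambda>k. graft (cs ! k) (yss ! k)) [0..<length cs]"
proof (induction cs arbitrary: yss)
  case (Cons c cs)
  then obtain y ys where yss: "yss = y # ys" by (cases yss) auto
  have "graft_list cs (concat ys) = map (\<lambda>k. graft (cs ! k) (ys ! k)) [0..<length cs]"
    using Cons yss by force
  then show ?case
    using Cons.prems yss by (auto simp: map_upt_Suc simp del: upt_Suc)
qed simp

lemma graft_Node_split:
  assumes "length ts = leaves (Node s cs)"
  obtains yss where "length yss = length cs" and "\<forall>k<length cs. length (yss ! k) = leaves (cs ! k)"
    and "ts = concat yss" and "graft (Node s cs) ts = Node s (map (\<lambda>k. graft (cs ! k) (yss ! k)) [0..<length cs])"
proof -
  obtain yss where yss: "length yss = length cs" "\<forall>k<length cs. length (yss ! k) = leaves (cs ! k)"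
    "ts = concat yss"
    using split_concat[of ts cs] assms by auto
  with that show ?thesis
    using graft_list_concat[OF yss(1,2)] by simp
qed

lemma nodes_subset_graft:
  "length ts = leaves t \<Longrightarrow> set (nodes_term t) \<subseteq> set (nodes_term (graft t ts))"
proof (induction t arbitrary: ts)
  case (Node s cs)
  obtain yss where yss: "length yss = length cs" "\<forall>k<length cs. length (yss ! k) = leaves (cs ! k)"
    and graft_eq: "graft (Node s cs) ts = Node s (map (\<lambda>k. graft (cs ! k) (yss ! k)) [0..<length cs])"
    using graft_Node_split[OF Node.prems] by blast
  have "set (nodes_term (cs ! k)) \<subseteq> set (nodes_term (graft (cs ! k) (yss ! k)))" if "k < length cs" for k
    using Node.IH[OF nth_mem[OF that]] yss that by simp
  then show ?case
    unfolding graft_eq nodes_Node by force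
qed simp

lemma trunk_branches_empty: "trunk t {} = Leaf \<and> branches t {} = [t]"
  by (cases t) auto

lemma trunk_branches_of_graft:
  "length ts = leaves t' \<Longrightarrow>
   trunk (graft t' ts) (set (nodes_term t')) = t' \<and> branches (graft t' ts) (set (nodes_term t')) = ts"
proof (induction t' arbitrary: ts)
  case Leaf
  then show ?case by (cases ts) (auto simp: trunk_branches_empty)
next
  case (Node s cs)
  obtain yss where yss: "length yss = length cs" "\<forall>k<length cs. length (yss ! k) = leaves (cs ! k)"
    "ts = concat yss"
    and graft_eq: "graft (Node s cs) ts = Node s (map (\<lambda>k. graft (cs ! k) (yss ! k)) [0..<length cs])"
    using graft_Node_split[OF Node.prems] by blast
  let ?S = "set (nodes_term (Node s cs))"
  have IH: "trunk (graft (cs ! k) (yss ! k)) (set (nodes_term (cs ! k))) = cs ! k \<and>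
      branches (graft (cs ! k) (yss ! k)) (set (nodes_term (cs ! k))) = yss ! k" if "k < length cs" for k
    using Node.IH[OF nth_mem[OF that]] yss that by simp
  have slice: "{q. k # q \<in> ?S} = set (nodes_term (cs ! k))" if "k < length cs" for k
    using that by (simp add: Cons_in_nodes_Node_iff del: nodes_term.simps(2))
  have "[] \<in> ?S"
    by simp
  then have "trunk (graft (Node s cs) ts) ?S = Node s (map (\<lambda>k. cs ! k) [0..<length cs])"
    unfolding graft_eq using IH slice by (simp del: nodes_term.simps(2))
  moreover have "branches (graft (Node s cs) ts) ?S =
      concat (map (\<lambda>k. branches (graft (cs ! k) (yss ! k)) {q. k # q \<in> ?S}) [0..<length cs])"
    unfolding graft_eq using \<open>[] \<in> ?S\<close>
    by (simp, intro arg_cong[where f = concat] map_cong) simp_all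
  moreover have "\<dots> = concat (map (\<lambda>k. yss ! k) [0..<length yss])"
    using IH slice yss(1) by (intro arg_cong[where f = concat] map_cong) auto
  ultimately show ?case
    using yss(3) by (simp add: map_nth)
qed

lemma restr_in_eq_trunk:
  fixes t :: "'s sterm" and cs :: "'s sterm list"
  shows "K [] \<Longrightarrow> restr_in t K = trunk t {q. K q}"
    and "restr_list j cs K = map (\<lambda>k. trunk (cs ! k) {q. K ((j + k) # q)}) [0..<length cs]"
proof (induction t K and j cs K rule: restr_in_restr_list.induct)
  case (4 j c cs K)
  have "(if K [j] then restr_in c (\<lambda>q. K (j # q)) else Leaf) = trunk c {q. K (j # q)}"
    using 4 by (cases "K [j]"; cases c) auto
  with 4 show ?case by (simp add: map_upt_Suc del: upt_Suc)
qed (simp_all add: comp_def)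

lemma restr_in_all_kept:
  fixes t :: "'s sterm" and cs :: "'s sterm list"
  shows "\<forall>q\<in>set (nodes_term t). K q \<Longrightarrow> restr_in t K = t"
    and "\<forall>q\<in>set (nodes_list j cs). K q \<Longrightarrow> restr_list j cs K = cs"
proof (induction t K and j cs K rule: restr_in_restr_list.induct)
  case (4 j c cs K)
  have "(if K [j] then restr_in c (\<lambda>q. K (j # q)) else Leaf) = c"
    using 4 by (cases c) auto
  with 4 show ?case by simp
qed simp_all

lemma rd_concat: "rd (concat xss) = concat (map rd xss)"
  unfolding rd_def by (induction xss) auto

lemma rd_branches:
  "prefix_closed S \<Longrightarrow> rd (branches t S) =
     map (subtree t) (filter (\<lambda>p. p \<notin> S \<and> (p = [] \<or> butlast p \<in> S)) (nodes_term t))"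
proof (induction t arbitrary: S)
  case Leaf
  then show ?case by (simp add: rd_def)
next
  case (Node s cs)
  define P where "P = (\<lambda>(S :: nat list set) p. p \<notin> S \<and> (p = [] \<or> butlast p \<in> S))"
  define N where "N = (\<lambda>k. nodes_term (cs ! k))"
  have nodes: "nodes_term (Node s cs) = [] # concat (map (\<lambda>k. map (Cons k) (N k)) [0..<length cs])"
    unfolding N_def by (rule nodes_Node)
  show ?case
  proof (cases "[] \<in> S")
    case False
    then have "S = {}" using prefix_closed_Nil_notin[OF Node.prems] by blast
    then have "filter (P S) (nodes_term (Node s cs)) = [[]]"
      unfolding nodes P_def by (auto simp: filter_empty_conv)
    with False show ?thesis unfolding P_def by (simp add: rd_def)
  next
    case True
    have P_Cons: "P S (k # q) = P {q. k # q \<in> S} q" for k q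
      using True by (cases q) (auto simp: P_def)
    have IH: "rd (branches (cs ! k) {q. k # q \<in> S}) =
        map (subtree (cs ! k)) (filter (P {q. k # q \<in> S}) (N k))" if "k < length cs" for k
      unfolding N_def P_def using that Node.IH prefix_closed_Cons_slice[OF Node.prems] by simp
    have "rd (branches (Node s cs) S) = concat (map (\<lambda>k. rd (branches (cs ! k) {q. k # q \<in> S})) [0..<length cs])"
      using True by (simp add: rd_concat comp_def)
    also have "\<dots> = concat (map (\<lambda>k. map (subtree (Node s cs)) (filter (P S) (map (Cons k) (N k)))) [0..<length cs])"
      using IH by (intro arg_cong[where f = concat] map_cong) (simp_all add: filter_map P_Cons comp_def)
    also have "\<dots> = map (subtree (Node s cs)) (filter (P S) (nodes_term (Node s cs)))"
      unfolding nodes using True by (simp add: P_def filter_concat map_concat comp_def)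
    finally show ?thesis unfolding P_def .
  qed
qed

definition restr_term :: "'s sterm \<Rightarrow> nat list set \<Rightarrow> 's forest" where
  "restr_term t S = map (\<lambda>p. restr_in (subtree t p) (\<lambda>q. p @ q \<in> S))
      (filter (\<lambda>p. p \<in> S \<and> (p = [] \<or> butlast p \<notin> S)) (nodes_term t))"

lemma restr_term_eq_trunk: "prefix_closed S \<Longrightarrow> restr_term t S = rd [trunk t S]"
proof (cases "t = Leaf \<or> [] \<notin> S")
  case True
  assume "prefix_closed S"
  with True have "t = Leaf \<or> S = {}"
    using prefix_closed_Nil_notin by blast
  then have "restr_term t S = [] \<and> trunk t S = Leaf"
    by (cases t) (auto simp: restr_term_def)
  then show ?thesis
    by (simp add: rd_def)
next
  case False
  assume closed: "prefix_closed S"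
  then obtain s cs where t: "t = Node s cs" and "[] \<in> S"
    using False by (cases t) auto
  have "filter (\<lambda>p. p \<in> S \<and> (p = [] \<or> butlast p \<notin> S)) (nodes_term t) = [[]]"
    unfolding t nodes_Node using \<open>[] \<in> S\<close> prefix_closed_butlast[OF closed]
    by (fastforce simp: filter_empty_conv)
  moreover have "restr_in t (\<lambda>q. q \<in> S) = trunk t S"
    using restr_in_eq_trunk(1)[of "\<lambda>q. q \<in> S" t] \<open>[] \<in> S\<close> by simp
  ultimately show ?thesis
    using \<open>[] \<in> S\<close> t by (simp add: restr_term_def rd_def)
qed

lemma restr_term_complement:
  assumes closed: "prefix_closed S" and sub: "S \<subseteq> set (nodes_term t)"
  shows "restr_term t (set (nodes_term t) - S) = rd (branches t S)"
proof -
  let ?N = "set (nodes_term t)"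
  have "filter (\<lambda>p. p \<in> ?N - S \<and> (p = [] \<or> butlast p \<notin> ?N - S)) (nodes_term t) =
        filter (\<lambda>p. p \<notin> S \<and> (p = [] \<or> butlast p \<in> S)) (nodes_term t)"
  proof (rule filter_cong[OF refl])
    fix p assume "p \<in> ?N"
    moreover have "p \<noteq> [] \<Longrightarrow> butlast p \<in> ?N"
      using \<open>p \<in> ?N\<close> prefix_in_nodes by (metis append_butlast_last_id)
    ultimately show "(p \<in> ?N - S \<and> (p = [] \<or> butlast p \<notin> ?N - S)) =
        (p \<notin> S \<and> (p = [] \<or> butlast p \<in> S))"
      by blast
  qed
  moreover have "restr_in (subtree t p) (\<lambda>q. p @ q \<in> ?N - S) = subtree t p"
    if "p \<in> ?N" "p \<notin> S" for p
  proof (rule restr_in_all_kept(1), rule ballI)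
    fix q assume "q \<in> set (nodes_term (subtree t p))"
    then have "p @ q \<in> ?N" using append_in_nodes_subtree that by blast
    moreover have "p @ q \<notin> S" using that closed unfolding prefix_closed_def by blast
    ultimately show "p @ q \<in> ?N - S" by blast
  qed
  ultimately show ?thesis
    unfolding restr_term_def rd_branches[OF closed] by (simp cong: map_cong)
qed

definition cut_count :: "'s sterm \<Rightarrow> 's forest \<Rightarrow> 's forest \<Rightarrow> nat" where
  "cut_count t u v = card {S. S \<subseteq> set (nodes_term t) \<and> prefix_closed S \<and>
     restr_term t S = u \<and> restr_term t (set (nodes_term t) - S) = v}"

lemma DeltaT_eq_cut_count:
  assumes wf: "wf_term Sig ar t"
  shows "DeltaT Sig ar t (u, v) = of_nat (cut_count t u v)"
proof -
  let ?A = "{S. S \<subseteq> set (nodes_term t) \<and> prefix_closed S \<and>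
     restr_term t S = u \<and> restr_term t (set (nodes_term t) - S) = v}"
  let ?B = "{(t', ts). wf_term Sig ar t' \<and> (\<forall>x\<in>set ts. wf_term Sig ar x) \<and>
        length ts = leaves t' \<and> graft t' ts = t \<and> rd [t'] = u \<and> rd ts = v}"
  have decomposition_cut: "trunk t (set (nodes_term t')) = t' \<and> branches t (set (nodes_term t')) = ts \<and>
      set (nodes_term t') \<subseteq> set (nodes_term t)" if "(t', ts) \<in> ?B" for t' ts
    using that trunk_branches_of_graft[of ts t'] nodes_subset_graft[of ts t'] by auto
  have "bij_betw (\<lambda>S. (trunk t S, branches t S)) ?A ?B"
  proof (rule bij_betw_byWitness[where f' = "\<lambda>(t', ts). set (nodes_term t')"])
    show "\<forall>S\<in>?A. (\<lambda>(t', ts). set (nodes_term t')) (trunk t S, branches t S) = S"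
      by (auto simp: nodes_trunk)
    show "\<forall>x\<in>?B. (\<lambda>S. (trunk t S, branches t S)) ((\<lambda>(t', ts). set (nodes_term t')) x) = x"
    proof
      fix x assume "x \<in> ?B"
      then obtain t' ts where "x = (t', ts)" and "(t', ts) \<in> ?B"
        by (cases x) simp
      with decomposition_cut[of t' ts]
      show "(\<lambda>S. (trunk t S, branches t S)) ((\<lambda>(t', ts). set (nodes_term t')) x) = x"
        by simp
    qed
    show "(\<lambda>S. (trunk t S, branches t S)) ` ?A \<subseteq> ?B"
      using wf_trunk_branches[OF wf] graft_trunk_branches
      by (auto simp: restr_term_eq_trunk restr_term_complement)
    show "(\<lambda>(t', ts). set (nodes_term t')) ` ?B \<subseteq> ?A"
    proof (unfold image_subset_iff, intro ballI)
      fix x assume "x \<in> ?B"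
      then obtain t' ts where x: "x = (t', ts)" and "(t', ts) \<in> ?B"
        by (cases x) simp
      with decomposition_cut[of t' ts] prefix_closed_nodes_term
      show "(\<lambda>(t', ts). set (nodes_term t')) x \<in> ?A"
        by (auto simp: restr_term_eq_trunk restr_term_complement)
    qed
  qed
  then have "card ?B = card ?A"
    by (rule bij_betw_same_card[symmetric])
  then show ?thesis
    unfolding DeltaT_def cut_count_def by simp
qed

definition node_set :: "'s forest \<Rightarrow> (nat \<times> nat list) set" where
  "node_set f = set (forest_nodes f)"

definition restr_nodes :: "'s forest \<Rightarrow> (nat \<times> nat list) set \<Rightarrow> 's forest" where
  "restr_nodes f X = map (\<lambda>(i, p). restr_in (subtree (f ! i) p) (\<lambda>q. (i, p @ q) \<in> X))
       (filter (\<lambda>(i, p). (i, p) \<in> X \<and> (p = [] \<or> (i, butlast p) \<notin> X)) (forest_nodes f))"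

definition forest_prefix_closed :: "(nat \<times> nat list) set \<Rightarrow> bool" where
  "forest_prefix_closed X \<longleftrightarrow> (\<forall>i. prefix_closed {p. (i, p) \<in> X})"

definition forest_cut_count :: "'s forest \<Rightarrow> 's forest \<Rightarrow> 's forest \<Rightarrow> nat" where
  "forest_cut_count f u v = card {X. X \<subseteq> node_set f \<and> forest_prefix_closed X \<and>
     restr_nodes f X = u \<and> restr_nodes f (node_set f - X) = v}"

definition head_paths :: "(nat \<times> nat list) set \<Rightarrow> nat list set" where
  "head_paths X = {p. (0, p) \<in> X}"

definition tail_nodes :: "(nat \<times> nat list) set \<Rightarrow> (nat \<times> nat list) set" where
  "tail_nodes X = {(i, p). (Suc i, p) \<in> X}"

lemma forest_nodes_Nil: "forest_nodes [] = []"
  by (simp add: forest_nodes_def)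

lemma forest_nodes_Cons:
  "forest_nodes (t # g) = map (Pair 0) (nodes_term t) @ map (apfst Suc) (forest_nodes g)"
  unfolding forest_nodes_def by (simp add: map_upt_Suc map_concat comp_def del: upt_Suc)

lemma node_set_Cons: "node_set (t # g) = Pair 0 ` set (nodes_term t) \<union> apfst Suc ` node_set g"
  unfolding node_set_def forest_nodes_Cons by simp

lemma restr_nodes_Cons:
  "restr_nodes (t # g) X = restr_term t (head_paths X) @ restr_nodes g (tail_nodes X)"
  unfolding restr_nodes_def restr_term_def forest_nodes_Cons head_paths_def tail_nodes_def
  by (simp add: filter_map comp_def case_prod_unfold apfst_def map_prod_def)

lemma head_paths_node_set: "head_paths (node_set (t # g)) = set (nodes_term t)"
  unfolding node_set_Cons head_paths_def by auto

lemma tail_nodes_node_set: "tail_nodes (node_set (t # g)) = node_set g"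
  unfolding node_set_Cons tail_nodes_def by force

lemma head_paths_mono: "X \<subseteq> Y \<Longrightarrow> head_paths X \<subseteq> head_paths Y"
  unfolding head_paths_def by auto

lemma tail_nodes_mono: "X \<subseteq> Y \<Longrightarrow> tail_nodes X \<subseteq> tail_nodes Y"
  unfolding tail_nodes_def by auto

lemma head_paths_diff: "head_paths (A - B) = head_paths A - head_paths B"
  unfolding head_paths_def by auto

lemma tail_nodes_diff: "tail_nodes (A - B) = tail_nodes A - tail_nodes B"
  unfolding tail_nodes_def by auto

lemma head_paths_tail_nodes_inverse: "Pair 0 ` head_paths X \<union> apfst Suc ` tail_nodes X = X"
proof (rule set_eqI, rule iffI)
  fix x assume "x \<in> Pair 0 ` head_paths X \<union> apfst Suc ` tail_nodes X"
  then show "x \<in> X" by (auto simp: head_paths_def tail_nodes_def)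
next
  fix x assume "x \<in> X"
  obtain i p where x: "x = (i, p)" by (cases x)
  show "x \<in> Pair 0 ` head_paths X \<union> apfst Suc ` tail_nodes X"
  proof (cases i)
    case 0
    then have "p \<in> head_paths X" using \<open>x \<in> X\<close> x by (simp add: head_paths_def)
    then show ?thesis using x 0 by blast
  next
    case (Suc j)
    then have "(j, p) \<in> tail_nodes X" using \<open>x \<in> X\<close> x by (simp add: tail_nodes_def)
    moreover have "x = apfst Suc (j, p)" using x Suc by simp
    ultimately show ?thesis by blast
  qed
qed

lemma head_paths_join: "head_paths (Pair 0 ` S \<union> apfst Suc ` Y) = S"
  unfolding head_paths_def by auto

lemma tail_nodes_join: "tail_nodes (Pair 0 ` S \<union> apfst Suc ` Y) = Y"
  unfolding tail_nodes_def by force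

lemma forest_prefix_closed_iff:
  "forest_prefix_closed X \<longleftrightarrow> prefix_closed (head_paths X) \<and> forest_prefix_closed (tail_nodes X)"
proof -
  have "{p. (i, p) \<in> tail_nodes X} = {p. (Suc i, p) \<in> X}" for i
    by (simp add: tail_nodes_def)
  then show ?thesis
    unfolding forest_prefix_closed_def head_paths_def by (metis not0_implies_Suc)
qed

lemma card_append_pairs:
  assumes "finite A" and "finite B"
  shows "card {(a, b). a \<in> A \<and> b \<in> B \<and> g a @ h b = u \<and> g' a @ h' b = v} =
    (\<Sum>i\<le>length u. \<Sum>j\<le>length v. card {a\<in>A. g a = take i u \<and> g' a = take j v} *
        card {b\<in>B. h b = drop i u \<and> h' b = drop j v})"
proof -
  let ?P = "{(a, b). a \<in> A \<and> b \<in> B \<and> g a @ h b = u \<and> g' a @ h' b = v}"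
  let ?split = "\<lambda>(a, b). (length (g a), length (g' a))"
  have fiber: "{x \<in> ?P. ?split x = (i, j)} =
      {a\<in>A. g a = take i u \<and> g' a = take j v} \<times> {b\<in>B. h b = drop i u \<and> h' b = drop j v}"
    if "i \<le> length u" "j \<le> length v" for i j
    using that by (auto simp: append_eq_conv_conj)
  have "finite ?P"
    by (rule finite_subset[of _ "A \<times> B"]) (use assms in auto)
  moreover have "?split ` ?P \<subseteq> {..length u} \<times> {..length v}"
    by auto
  ultimately have "card ?P = (\<Sum>y\<in>{..length u} \<times> {..length v}. card {x \<in> ?P. ?split x = y})"
    using sum.group[of ?P "{..length u} \<times> {..length v}" ?split "\<lambda>_. 1 :: nat"] by simp
  also have "\<dots> = (\<Sum>i\<le>length u. \<Sum>j\<le>length v. card {x \<in> ?P. ?split x = (i, j)})"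
    by (simp add: sum.cartesian_product)
  also have "\<dots> = (\<Sum>i\<le>length u. \<Sum>j\<le>length v. card {a\<in>A. g a = take i u \<and> g' a = take j v} *
        card {b\<in>B. h b = drop i u \<and> h' b = drop j v})"
    by (intro sum.cong refl) (simp only: atMost_iff fiber card_cartesian_product)
  finally show ?thesis .
qed

lemma card_Collect_bij_betw:
  assumes "bij_betw h A B"
  shows "card {x \<in> A. P (h x)} = card {y \<in> B. P y}"
proof -
  have "bij_betw h {x \<in> A. P (h x)} {y \<in> B. P y}"
    by (rule bij_betw_subset[OF assms]) (use assms in \<open>force simp: bij_betw_def\<close>)+
  then show ?thesis
    by (rule bij_betw_same_card)
qed

lemma bij_betw_head_paths_tail_nodes:
  "bij_betw (\<lambda>X. (head_paths X, tail_nodes X))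
     {X. X \<subseteq> node_set (t # g) \<and> forest_prefix_closed X}
     ({S. S \<subseteq> set (nodes_term t) \<and> prefix_closed S} \<times> {Y. Y \<subseteq> node_set g \<and> forest_prefix_closed Y})"
proof (rule bij_betw_byWitness[where f' = "\<lambda>(S, Y). Pair 0 ` S \<union> apfst Suc ` Y"])
  show "\<forall>X\<in>{X. X \<subseteq> node_set (t # g) \<and> forest_prefix_closed X}.
      (\<lambda>(S, Y). Pair 0 ` S \<union> apfst Suc ` Y) (head_paths X, tail_nodes X) = X"
    by (simp add: head_paths_tail_nodes_inverse)
  show "\<forall>P\<in>{S. S \<subseteq> set (nodes_term t) \<and> prefix_closed S} \<times> {Y. Y \<subseteq> node_set g \<and> forest_prefix_closed Y}.
      (\<lambda>X. (head_paths X, tail_nodes X)) ((\<lambda>(S, Y). Pair 0 ` S \<union> apfst Suc ` Y) P) = P"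
    by (auto simp: head_paths_join tail_nodes_join)
  show "(\<lambda>X. (head_paths X, tail_nodes X)) ` {X. X \<subseteq> node_set (t # g) \<and> forest_prefix_closed X} \<subseteq>
      {S. S \<subseteq> set (nodes_term t) \<and> prefix_closed S} \<times> {Y. Y \<subseteq> node_set g \<and> forest_prefix_closed Y}"
  proof (unfold image_subset_iff, intro ballI)
    fix X assume "X \<in> {X. X \<subseteq> node_set (t # g) \<and> forest_prefix_closed X}"
    then show "(head_paths X, tail_nodes X) \<in>
        {S. S \<subseteq> set (nodes_term t) \<and> prefix_closed S} \<times> {Y. Y \<subseteq> node_set g \<and> forest_prefix_closed Y}"
      using head_paths_mono[of X "node_set (t # g)"] tail_nodes_mono[of X "node_set (t # g)"]
        forest_prefix_closed_iff[of X]
      by (simp add: head_paths_node_set tail_nodes_node_set)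
  qed
  show "(\<lambda>(S, Y). Pair 0 ` S \<union> apfst Suc ` Y) `
      ({S. S \<subseteq> set (nodes_term t) \<and> prefix_closed S} \<times> {Y. Y \<subseteq> node_set g \<and> forest_prefix_closed Y}) \<subseteq>
      {X. X \<subseteq> node_set (t # g) \<and> forest_prefix_closed X}"
  proof (unfold image_subset_iff, intro ballI)
    fix P assume P: "P \<in> {S. S \<subseteq> set (nodes_term t) \<and> prefix_closed S} \<times>
        {Y. Y \<subseteq> node_set g \<and> forest_prefix_closed Y}"
    obtain S Y where SY: "P = (S, Y)"
      by (cases P)
    have "forest_prefix_closed (Pair 0 ` S \<union> apfst Suc ` Y)"
      using P unfolding SY forest_prefix_closed_iff[of "Pair 0 ` S \<union> apfst Suc ` Y"]
        head_paths_join tail_nodes_join by simp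
    moreover have "Pair 0 ` S \<union> apfst Suc ` Y \<subseteq> node_set (t # g)"
      using P unfolding SY node_set_Cons by auto
    ultimately show "(\<lambda>(S, Y). Pair 0 ` S \<union> apfst Suc ` Y) P \<in>
        {X. X \<subseteq> node_set (t # g) \<and> forest_prefix_closed X}"
      unfolding SY by simp
  qed
qed

lemma forest_cut_count_Cons:
  "forest_cut_count (t # g) u v = (\<Sum>i\<le>length u. \<Sum>j\<le>length v.
     cut_count t (take i u) (take j v) * forest_cut_count g (drop i u) (drop j v))"
proof -
  let ?N = "set (nodes_term t)"
  let ?A = "{S. S \<subseteq> ?N \<and> prefix_closed S}"
  let ?B = "{Y. Y \<subseteq> node_set g \<and> forest_prefix_closed Y}"
  let ?cut = "\<lambda>(S, Y). restr_term t S @ restr_nodes g Y = u \<and>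
     restr_term t (?N - S) @ restr_nodes g (node_set g - Y) = v"
  have "forest_cut_count (t # g) u v =
      card {X \<in> {X. X \<subseteq> node_set (t # g) \<and> forest_prefix_closed X}. ?cut (head_paths X, tail_nodes X)}"
    unfolding forest_cut_count_def
    by (simp add: restr_nodes_Cons head_paths_diff tail_nodes_diff head_paths_node_set
        tail_nodes_node_set conj_assoc)
  also have "\<dots> = card {P \<in> ?A \<times> ?B. ?cut P}"
    by (rule card_Collect_bij_betw[OF bij_betw_head_paths_tail_nodes])
  also have "\<dots> = (\<Sum>i\<le>length u. \<Sum>j\<le>length v.
      card {S\<in>?A. restr_term t S = take i u \<and> restr_term t (?N - S) = take j v} *
      card {Y\<in>?B. restr_nodes g Y = drop i u \<and> restr_nodes g (node_set g - Y) = drop j v})"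
    by (subst card_append_pairs[symmetric]) (auto simp: node_set_def intro: arg_cong[where f = card])
  also have "\<dots> = (\<Sum>i\<le>length u. \<Sum>j\<le>length v.
      cut_count t (take i u) (take j v) * forest_cut_count g (drop i u) (drop j v))"
    unfolding cut_count_def forest_cut_count_def
    by (intro sum.cong refl arg_cong2[where f = "(*)"] arg_cong[where f = card]) auto
  finally show ?thesis .
qed

lemma Delta_eq_forest_cut_count:
  "\<forall>t\<in>set f. wf_term Sig ar t \<Longrightarrow>
   (Delta Sig ar f :: ('s, 'k::comm_semiring_1) tensor) = (\<lambda>(u, v). of_nat (forest_cut_count f u v))"
proof (induction f)
  case Nil
  have "forest_cut_count [] u v = (if u = [] \<and> v = [] then 1 else 0)" for u v :: "'s forest"
  proof -
    have empty: "{X. X \<subseteq> node_set ([] :: 's forest) \<and> forest_prefix_closed X \<and>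
        restr_nodes [] X = u \<and> restr_nodes [] (node_set [] - X) = v} =
        (if u = [] \<and> v = [] then {{}} else {})"
      by (auto simp: node_set_def restr_nodes_def forest_nodes_Nil forest_prefix_closed_def
          prefix_closed_def)
    show ?thesis
      unfolding forest_cut_count_def empty by simp
  qed
  then show ?case
    unfolding Delta_def tone_def tbasis_def by (auto simp: fun_eq_iff)
next
  case (Cons t g)
  then have "(Delta Sig ar (t # g) :: ('s, 'k) tensor) (u, v) = of_nat (forest_cut_count (t # g) u v)"
    for u v :: "'s forest"
    by (simp add: Delta_def tmul_def DeltaT_eq_cut_count forest_cut_count_Cons)
  then show ?case
    by (auto simp: fun_eq_iff)
qed

definition node_of :: "'s forest \<Rightarrow> nat \<Rightarrow> nat \<times> nat list" where
  "node_of f k = forest_nodes f ! (k - 1)"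

lemma distinct_forest_nodes: "distinct (forest_nodes f)"
  unfolding forest_nodes_def
  by (rule distinct_concat_map) (auto simp: distinct_map distinct_nodes_term inj_on_def)

lemma bij_betw_node_of: "bij_betw (node_of f) {1..deg f} (node_set f)"
proof -
  have "bij_betw (\<lambda>k. k - 1) {1..deg f} {..<deg f}"
    by (rule bij_betw_byWitness[where f' = Suc]) auto
  moreover have "bij_betw ((!) (forest_nodes f)) {..<deg f} (node_set f)"
    by (rule bij_betw_nth) (simp_all add: distinct_forest_nodes deg_def node_set_def)
  ultimately show ?thesis
    unfolding node_of_def using bij_betw_trans by (fastforce simp: comp_def)
qed

lemma node_of_image_complement:
  "I \<subseteq> {1..deg f} \<Longrightarrow> node_of f ` ({1..deg f} - I) = node_set f - node_of f ` I"
  using bij_betw_node_of[of f] inj_on_image_set_diff[of "node_of f" "{1..deg f}" "{1..deg f}" I]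
  by (simp add: bij_betw_def)

lemma node_num_iff: "node_num f k x \<longleftrightarrow> k \<in> {1..deg f} \<and> node_of f k = x"
  unfolding node_num_def node_of_def by auto

lemma restr_eq_restr_nodes: "I \<subseteq> {1..deg f} \<Longrightarrow> restr f I = restr_nodes f (node_of f ` I)"
proof -
  assume "I \<subseteq> {1..deg f}"
  then have "kept f I = (\<lambda>x. x \<in> node_of f ` I)"
    unfolding kept_def node_num_iff by blast
  then show ?thesis
    unfolding restr_def restr_nodes_def by simp
qed

lemma ancestor_iff:
  "ancestor f a b \<longleftrightarrow> a \<in> {1..deg f} \<and> b \<in> {1..deg f} \<and>
     (\<exists>i p r. node_of f a = (i, p) \<and> node_of f b = (i, p @ r) \<and> r \<noteq> [])"
  unfolding ancestor_def node_num_iff by blast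

lemma prefix_in_node_set: "(i, p @ r) \<in> node_set f \<Longrightarrow> (i, p) \<in> node_set f"
  unfolding node_set_def forest_nodes_def using prefix_in_nodes by fastforce

lemma ancestor_closed_iff:
  assumes I: "I \<subseteq> {1..deg f}"
  shows "(\<forall>a b. b \<in> I \<and> ancestor f a b \<longrightarrow> a \<in> I) \<longleftrightarrow> forest_prefix_closed (node_of f ` I)"
proof -
  have inj: "inj_on (node_of f) {1..deg f}" and onto: "node_of f ` {1..deg f} = node_set f"
    using bij_betw_node_of[of f] by (auto simp: bij_betw_def)
  show ?thesis
  proof
    assume closed: "\<forall>a b. b \<in> I \<and> ancestor f a b \<longrightarrow> a \<in> I"
    show "forest_prefix_closed (node_of f ` I)"
      unfolding forest_prefix_closed_def prefix_closed_def
    proof (intro allI impI, unfold mem_Collect_eq)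
      fix i p r assume "(i, p @ r) \<in> node_of f ` I"
      then obtain b where b: "b \<in> I" "node_of f b = (i, p @ r)" by (metis imageE)
      show "(i, p) \<in> node_of f ` I"
      proof (cases "r = []")
        case False
        have "(i, p @ r) \<in> node_set f"
          using b I onto by (metis image_eqI subsetD)
        then have "(i, p) \<in> node_set f"
          by (rule prefix_in_node_set)
        then obtain a where a: "a \<in> {1..deg f}" "node_of f a = (i, p)"
          using onto by (metis imageE)
        with b I False have "ancestor f a b"
          unfolding ancestor_iff by blast
        with closed b(1) have "a \<in> I"
          by blast
        with a(2) show ?thesis
          by (metis image_eqI)
      next
        case True
        with b show ?thesis by (metis append_Nil2 image_eqI)
      qed
    qed
  next
    assume closed: "forest_prefix_closed (node_of f ` I)"
    show "\<forall>a b. b \<in> I \<and> ancestor f a b \<longrightarrow> a \<in> I"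
    proof (intro allI impI)
      fix a b assume "b \<in> I \<and> ancestor f a b"
      then obtain i p r where a: "a \<in> {1..deg f}" "node_of f a = (i, p)"
        and b: "b \<in> I" "node_of f b = (i, p @ r)"
        unfolding ancestor_iff by blast
      have "(i, p) \<in> node_of f ` I"
        using closed b unfolding forest_prefix_closed_def prefix_closed_def by (metis imageI mem_Collect_eq)
      then obtain a' where "a' \<in> I" "node_of f a' = node_of f a"
        using a(2) by (metis imageE)
      with a(1) I inj show "a \<in> I"
        by (metis inj_onD subsetD)
    qed
  qed
qed

lemma admissible_iff:
  assumes I1: "I1 \<subseteq> {1..deg f}" and I2: "I2 \<subseteq> {1..deg f}"
  shows "admissible f I1 I2 \<longleftrightarrow> I2 = {1..deg f} - I1 \<and> forest_prefix_closed (node_of f ` I1)"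
proof -
  have "(\<forall>a b. b \<in> I1 \<and> ancestor f a b \<longrightarrow> a \<in> I1) \<Longrightarrow> I2 = {1..deg f} - I1 \<Longrightarrow>
      (\<forall>a b. a \<in> I2 \<and> ancestor f a b \<longrightarrow> b \<in> I2)"
    unfolding ancestor_iff by blast
  then show ?thesis
    unfolding admissible_def ancestor_closed_iff[OF I1, symmetric] using I1 I2 by blast
qed

lemma admissible_restr_pairs:
  "{x \<in> Pow {1..deg f} \<times> Pow {1..deg f}.
      case x of (I1, I2) \<Rightarrow> admissible f I1 I2 \<and> restr f I1 = u \<and> restr f I2 = v} =
   (\<lambda>I. (I, {1..deg f} - I)) ` {I \<in> Pow {1..deg f}. forest_prefix_closed (node_of f ` I) \<and>
      restr_nodes f (node_of f ` I) = u \<and> restr_nodes f (node_set f - node_of f ` I) = v}"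
    (is "?T = (\<lambda>I. (I, ?D - I)) ` ?C")
proof (rule set_eqI)
  fix x :: "nat set \<times> nat set"
  obtain I1 I2 where x: "x = (I1, I2)"
    by (cases x)
  show "x \<in> ?T \<longleftrightarrow> x \<in> (\<lambda>I. (I, ?D - I)) ` ?C"
  proof (cases "I1 \<subseteq> ?D \<and> I2 \<subseteq> ?D")
    case True
    then have "x \<in> ?T \<longleftrightarrow> I2 = ?D - I1 \<and> forest_prefix_closed (node_of f ` I1) \<and>
        restr f I1 = u \<and> restr f (?D - I1) = v"
      unfolding x using admissible_iff[of I1 f I2] by auto
    also have "\<dots> \<longleftrightarrow> I1 \<in> ?C \<and> I2 = ?D - I1"
      using True node_of_image_complement[of I1 f] restr_eq_restr_nodes[of I1 f]
        restr_eq_restr_nodes[of "?D - I1" f] by auto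
    also have "\<dots> \<longleftrightarrow> x \<in> (\<lambda>I. (I, ?D - I)) ` ?C"
      unfolding x by blast
    finally show ?thesis .
  qed (auto simp: x)
qed

lemma admissible_sum_eq_forest_cut_count:
  "(\<Sum>(I1, I2)\<in>Pow {1..deg f} \<times> Pow {1..deg f}.
      (if admissible f I1 I2 then 1 else 0) * tbasis (restr f I1) (restr f I2) (u, v)) =
   (of_nat (forest_cut_count f u v) :: 'a::comm_semiring_1)"
proof -
  let ?D = "{1..deg f}" and ?N = "node_set f"
  let ?cut = "\<lambda>X. forest_prefix_closed X \<and> restr_nodes f X = u \<and> restr_nodes f (?N - X) = v"
  let ?Q = "\<lambda>(I1, I2). admissible f I1 I2 \<and> restr f I1 = u \<and> restr f I2 = v"
  let ?T = "{x \<in> Pow ?D \<times> Pow ?D. ?Q x}"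
  have "card ?T = card {I \<in> Pow ?D. ?cut (node_of f ` I)}"
    unfolding admissible_restr_pairs by (simp add: card_image inj_on_def)
  also have "\<dots> = card {X \<in> Pow ?N. ?cut X}"
    by (rule card_Collect_bij_betw[OF bij_betw_Pow[OF bij_betw_node_of]])
  finally have card_T: "card ?T = forest_cut_count f u v"
    unfolding forest_cut_count_def by (simp only: Pow_def mem_Collect_eq)
  have "(\<Sum>(I1, I2)\<in>Pow ?D \<times> Pow ?D.
      (if admissible f I1 I2 then 1 else 0) * tbasis (restr f I1) (restr f I2) (u, v)) =
      (\<Sum>x\<in>Pow ?D \<times> Pow ?D. if ?Q x then 1 else (0 :: 'a))"
    by (intro sum.cong refl) (simp add: tbasis_def split_def)
  also have "\<dots> = of_nat (card ?T)"
    by (simp add: sum.inter_filter[symmetric])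
  finally show ?thesis
    unfolding card_T .
qed

theorem proposition3p3:
  fixes Sig :: "'s set" and ar :: "'s \<Rightarrow> nat" and f :: "'s forest"
  assumes "reduced f" and "\<forall>t\<in>set f. wf_term Sig ar t"
  shows "(Delta Sig ar f :: ('s, 'k::field_char_0) tensor) =
    (\<lambda>x. \<Sum>(I1, I2)\<in>Pow {1..deg f} \<times> Pow {1..deg f}.
          (if admissible f I1 I2 then 1 else 0) * tbasis (restr f I1) (restr f I2) x)"
proof
  fix x :: "'s forest \<times> 's forest"
  obtain u v where x: "x = (u, v)"
    by (cases x)
  have "(Delta Sig ar f :: ('s, 'k) tensor) (u, v) = of_nat (forest_cut_count f u v)"
    unfolding Delta_eq_forest_cut_count[OF assms(2)] by simp
  then show "(Delta Sig ar f :: ('s, 'k) tensor) x = (\<Sum>(I1, I2)\<in>Pow {1..deg f} \<times> Pow {1..deg f}.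
      (if admissible f I1 I2 then 1 else 0) * tbasis (restr f I1) (restr f I2) x)"
    unfolding x admissible_sum_eq_forest_cut_count .
qed

end
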